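(* Let $(k,N)\in\{(2,27),(2,32),(2,36),(2,49),(4,9)\}$. For each integer $n\ge2$, let $\phi_n\in M_{2-k}^\infty(\Gamma_0(N))\cap\mathbb{Z}((q))$ be any form of the shape $\phi_n=q^{-n}+A_n(-1)q^{-1}+\sum_{m\ge1}A_n(m)q^m$ if $k=2$, or $\phi_n=q^{-n}+\sum_{m\ge-1}A_n(m)q^m$ if $k=4$. For each admissible $m$ (namely $m\in\{-1\}\cup\{1,2,3,\dots\}$ if $k=2$, and $m\ge-1$ if $k=4$), let $F_m$ be the unique element of $S_k^\infty(\Gamma_0(N))\cap\mathbb{Z}((q))$ of the form $F_m=-q^{-m}+\sum_{n\ge2}C_m(n)q^n$. Then for all integers $n\ge2$ and all admissible $m$, \[C_m(n)=A_n(m).\]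
   Context: $q=e^{2\pi i z}$. $M_{w}^\infty(\Gamma_0(N))$ is the space of weakly holomorphic modular forms of weight $w$ on $\Gamma_0(N)$ (trivial character), holomorphic on the upper half-plane and at every cusp except possibly $\infty$; $S_w^\infty(\Gamma_0(N))$ is the subspace of those vanishing at every cusp except possibly $\infty$. $\mathbb{Z}((q))$ denotes Laurent series in $q$ with integer coefficients. (Such $\phi_n$ and $F_m$ exist for each of the listed $(k,N)$.) *)

theory Defs
  imports "HOL-Analysis.Analysis"
begin

text \<open>Integer 2x2 matrices are represented as tuples (a,b,c,d) for the matrix
  with rows (a b) and (c d).\<close>

definition uhp :: "complex set" where
  "uhp = {z. Im z > 0}"

definition SL2Z :: "(int \<times> int \<times> int \<times> int) set" where
  "SL2Z = {(a,b,c,d). a*d - b*c = 1}"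

definition Gamma0 :: "int \<Rightarrow> (int \<times> int \<times> int \<times> int) set" where
  "Gamma0 N = {(a,b,c,d). a*d - b*c = 1 \<and> N dvd c}"

definition moebius :: "int \<times> int \<times> int \<times> int \<Rightarrow> complex \<Rightarrow> complex" where
  "moebius = (\<lambda>(a,b,c,d) z. (of_int a * z + of_int b) / (of_int c * z + of_int d))"

definition slash :: "int \<Rightarrow> (complex \<Rightarrow> complex) \<Rightarrow> int \<times> int \<times> int \<times> int \<Rightarrow> complex \<Rightarrow> complex" where
  "slash w f = (\<lambda>(a,b,c,d) z. (of_int c * z + of_int d) powi (- w) * f (moebius (a,b,c,d) z))"

text \<open>The cusp gamma(\<infinity>) is Gamma0(N)-equivalent to \<infinity>: some delta in Gamma0(N) has
  delta*gamma upper triangular (lower-left entry 0).\<close>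
definition cusp_equiv_infty :: "int \<Rightarrow> int \<times> int \<times> int \<times> int \<Rightarrow> bool" where
  "cusp_equiv_infty N = (\<lambda>(a,b,c,d). \<exists>a' b' c' d'. (a',b',c',d') \<in> Gamma0 N \<and> c'*a + d'*c = 0)"

text \<open>M_w^\<infinity>(Gamma0(N)): holomorphic on H, invariant under the weight-w slash action
  of Gamma0(N), meromorphic at \<infinity> (at most exponential growth in Im z, which for a
  1-periodic holomorphic function means a pole of finite order in q), and holomorphic
  (bounded) at every cusp not equivalent to \<infinity>.\<close>
definition wh_modular_form :: "int \<Rightarrow> int \<Rightarrow> (complex \<Rightarrow> complex) \<Rightarrow> bool" where
  "wh_modular_form w N f \<longleftrightarrow>
     f holomorphic_on uhp \<and>
     (\<forall>\<gamma>\<in>Gamma0 N. \<forall>z\<in>uhp. slash w f \<gamma> z = f z) \<and>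
     (\<exists>C B. \<forall>z. Im z \<ge> 1 \<longrightarrow> norm (f z) \<le> B * exp (C * Im z)) \<and>
     (\<forall>\<gamma>\<in>SL2Z. \<not> cusp_equiv_infty N \<gamma> \<longrightarrow>
        (\<exists>B. \<forall>z. Im z \<ge> 1 \<longrightarrow> norm (slash w f \<gamma> z) \<le> B))"

definition wh_cusp_form :: "int \<Rightarrow> int \<Rightarrow> (complex \<Rightarrow> complex) \<Rightarrow> bool" where
  "wh_cusp_form w N f \<longleftrightarrow>
     wh_modular_form w N f \<and>
     (\<forall>\<gamma>\<in>SL2Z. \<not> cusp_equiv_infty N \<gamma> \<longrightarrow>
        (\<forall>\<epsilon>>0. \<exists>Y. \<forall>z. Im z \<ge> Y \<longrightarrow> norm (slash w f \<gamma> z) \<le> \<epsilon>))"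

definition has_int_qexp :: "(complex \<Rightarrow> complex) \<Rightarrow> (int \<Rightarrow> int) \<Rightarrow> bool" where
  "has_int_qexp f a \<longleftrightarrow>
     (\<exists>M. \<forall>n<M. a n = 0) \<and>
     (\<forall>z\<in>uhp. ((\<lambda>n::int. of_int (a n) * exp (2 * of_real pi * \<i> * of_int n * z)) has_sum f z) UNIV)"

end

theory Submission
  imports Defs "HOL-Complex_Analysis.Complex_Analysis" "HOL-Real_Asymp.Real_Asymp"
begin

text \<open>The constant term of the weakly holomorphic weight-2 form \<open>\<phi>\<^sub>n F\<^sub>m\<close> is
  \<open>C\<^sub>m(n) - A\<^sub>n(m)\<close>, and the constant term of any weight-2 form on \<open>\<Gamma>\<^sub>0(N)\<close> that is
  holomorphic away from \<open>\<infinity>\<close> and vanishes at all other cusps is zero (the residue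
  theorem on the modular curve). We argue analytically: the trace \<open>G\<close> of such a form to
  \<open>SL\<^sub>2(\<int>)\<close> has a primitive \<open>H\<close> which is invariant under \<open>z \<mapsto> -1/z\<close> and \<open>z \<mapsto> z + 1\<close>
  up to constants, and both constants vanish (evaluate at the elliptic points \<open>i\<close> and
  \<open>\<rho>\<close>). Near \<open>\<infinity>\<close>, \<open>G\<close> is the principal part of the form plus \<open>o(1)\<close>, so \<open>H\<close> minus a
  primitive of the principal part changes by exactly minus the constant term under
  \<open>z \<mapsto> z + 1\<close> while having arbitrarily small derivative high up; hence the constant
  term is zero.\<close>

section \<open>The slash action of \<open>SL\<^sub>2(\<int>)\<close>\<close>

definition mat_mul :: "int \<times> int \<times> int \<times> int \<Rightarrow> int \<times> int \<times> int \<times> int \<Rightarrow> int \<times> int \<times> int \<times> int" where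
  "mat_mul = (\<lambda>(a,b,c,d) (a',b',c',d'). (a*a'+b*c', a*b'+b*d', c*a'+d*c', c*b'+d*d'))"

definition mat_adj :: "int \<times> int \<times> int \<times> int \<Rightarrow> int \<times> int \<times> int \<times> int" where
  "mat_adj = (\<lambda>(a,b,c,d). (d,-b,-c,a))"

definition mat_id :: "int \<times> int \<times> int \<times> int" where
  "mat_id = (1,0,0,1)"

definition j_factor :: "int \<times> int \<times> int \<times> int \<Rightarrow> complex \<Rightarrow> complex" where
  "j_factor = (\<lambda>(a,b,c,d) z. of_int c * z + of_int d)"

lemma mat_mul_assoc: "mat_mul (mat_mul x y) z = mat_mul x (mat_mul y z)"
  by (cases x; cases y; cases z) (simp add: mat_mul_def algebra_simps)

lemma mat_mul_id [simp]: "mat_mul x mat_id = x" "mat_mul mat_id x = x"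
  by (cases x; simp add: mat_mul_def mat_id_def)+

lemma mat_mul_adj: "x \<in> SL2Z \<Longrightarrow> mat_mul x (mat_adj x) = mat_id"
  by (cases x) (simp add: SL2Z_def mat_adj_def mat_mul_def mat_id_def algebra_simps)

lemma mat_adj_mul: "x \<in> SL2Z \<Longrightarrow> mat_mul (mat_adj x) x = mat_id"
  by (cases x) (simp add: SL2Z_def mat_adj_def mat_mul_def mat_id_def algebra_simps)

lemma mat_id_SL2Z: "mat_id \<in> SL2Z"
  by (simp add: mat_id_def SL2Z_def)

lemma SL2Z_mat_mul: "x \<in> SL2Z \<Longrightarrow> y \<in> SL2Z \<Longrightarrow> mat_mul x y \<in> SL2Z"
  by (cases x; cases y) (auto simp: mat_mul_def SL2Z_def algebra_simps)

lemma SL2Z_mat_adj: "x \<in> SL2Z \<Longrightarrow> mat_adj x \<in> SL2Z"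
  by (cases x) (simp add: SL2Z_def mat_adj_def algebra_simps)

lemma Gamma0_subset_SL2Z: "x \<in> Gamma0 N \<Longrightarrow> x \<in> SL2Z"
  by (cases x) (simp add: Gamma0_def SL2Z_def)

lemma mat_id_Gamma0: "mat_id \<in> Gamma0 N"
  by (simp add: mat_id_def Gamma0_def)

lemma Gamma0_mat_mul: "x \<in> Gamma0 N \<Longrightarrow> y \<in> Gamma0 N \<Longrightarrow> mat_mul x y \<in> Gamma0 N"
  by (cases x; cases y) (auto simp: Gamma0_def mat_mul_def algebra_simps)

lemma Gamma0_mat_adj: "x \<in> Gamma0 N \<Longrightarrow> mat_adj x \<in> Gamma0 N"
  by (cases x) (simp add: Gamma0_def mat_adj_def algebra_simps)

lemma open_uhp: "open uhp"
  unfolding uhp_def by (simp add: open_halfspace_Im_gt)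

lemma convex_uhp: "convex uhp"
  unfolding uhp_def by (simp add: convex_halfspace_Im_gt)

lemma j_factor_nonzero:
  assumes "\<gamma> \<in> SL2Z" "z \<in> uhp"
  shows "j_factor \<gamma> z \<noteq> 0"
proof -
  obtain a b c d where \<gamma>: "\<gamma> = (a,b,c,d)"
    by (cases \<gamma>) auto
  show ?thesis
  proof (cases "c = 0")
    case True
    then have "d \<noteq> 0"
      using assms(1) \<gamma> by (auto simp: SL2Z_def)
    then show ?thesis
      using True \<gamma> by (simp add: j_factor_def)
  next
    case False
    have "Im (j_factor \<gamma> z) = of_int c * Im z"
      using \<gamma> by (simp add: j_factor_def)
    then show ?thesis
      using False assms(2) by (auto simp: uhp_def)
  qed
qed

lemma Im_moebius:
  assumes "\<gamma> \<in> SL2Z"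
  shows "Im (moebius \<gamma> z) = Im z / (cmod (j_factor \<gamma> z))\<^sup>2"
proof -
  obtain a b c d where \<gamma>: "\<gamma> = (a,b,c,d)"
    by (cases \<gamma>) auto
  have det: "real_of_int a * real_of_int d - real_of_int b * real_of_int c = 1"
    using assms \<gamma> by (simp add: SL2Z_def) (metis of_int_1 of_int_diff of_int_mult)
  have "Im (moebius \<gamma> z) = (Im (of_int a * z + of_int b) * Re (j_factor \<gamma> z)
      - Re (of_int a * z + of_int b) * Im (j_factor \<gamma> z)) / (cmod (j_factor \<gamma> z))\<^sup>2"
    using \<gamma> by (simp add: moebius_def j_factor_def Im_divide cmod_power2)
  also have "Im (of_int a * z + of_int b) * Re (j_factor \<gamma> z) - Re (of_int a * z + of_int b) * Im (j_factor \<gamma> z)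
      = (real_of_int a * real_of_int d - real_of_int b * real_of_int c) * Im z"
    using \<gamma> by (simp add: j_factor_def algebra_simps)
  finally show ?thesis
    using det by simp
qed

lemma moebius_in_uhp: "\<gamma> \<in> SL2Z \<Longrightarrow> z \<in> uhp \<Longrightarrow> moebius \<gamma> z \<in> uhp"
  using Im_moebius[of \<gamma> z] j_factor_nonzero[of \<gamma> z] by (simp add: uhp_def)

lemma moebius_mat_mul:
  assumes x: "x \<in> SL2Z" and y: "y \<in> SL2Z" and z: "z \<in> uhp"
  shows "moebius (mat_mul x y) z = moebius x (moebius y z)"
proof -
  obtain a b c d where g: "x = (a,b,c,d)"
    by (cases x) auto
  obtain a' b' c' d' where h: "y = (a',b',c',d')"
    by (cases y) auto
  define u where "u = of_int a' * z + of_int b'"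
  define v where "v = of_int c' * z + of_int d'"
  have v0: "v \<noteq> 0"
    using j_factor_nonzero[OF y z] h by (simp add: j_factor_def v_def)
  have "moebius x (moebius y z) = (of_int a * (u/v) + of_int b) / (of_int c * (u/v) + of_int d)"
    using g h by (simp add: moebius_def u_def v_def)
  also have "\<dots> = ((of_int a * u + of_int b * v) / v) / ((of_int c * u + of_int d * v) / v)"
    using v0 by (simp add: add_divide_distrib)
  also have "\<dots> = (of_int a * u + of_int b * v) / (of_int c * u + of_int d * v)"
    using v0 by simp
  also have "\<dots> = moebius (mat_mul x y) z"
    using g h by (simp add: moebius_def mat_mul_def u_def v_def algebra_simps)
  finally show ?thesis ..
qed

lemma j_factor_mat_mul:
  assumes "y \<in> SL2Z" "z \<in> uhp"
  shows "j_factor (mat_mul x y) z = j_factor x (moebius y z) * j_factor y z"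
proof -
  obtain a b c d where "x = (a,b,c,d)"
    by (cases x) auto
  moreover obtain a' b' c' d' where "y = (a',b',c',d')"
    by (cases y) auto
  moreover note j_factor_nonzero[OF assms]
  ultimately show ?thesis
    by (simp add: moebius_def j_factor_def mat_mul_def field_simps)
qed

lemma slash_j_factor: "slash w f \<gamma> z = j_factor \<gamma> z powi (-w) * f (moebius \<gamma> z)"
  by (cases \<gamma>) (simp add: slash_def j_factor_def)

lemma slash_mat_id: "slash w f mat_id z = f z"
  by (simp add: slash_def mat_id_def moebius_def)

lemma slash_mat_mul:
  assumes x: "x \<in> SL2Z" and y: "y \<in> SL2Z" and z: "z \<in> uhp"
  shows "slash w f (mat_mul x y) z = slash w (slash w f x) y z"
  using j_factor_nonzero[OF y z] j_factor_nonzero[OF x moebius_in_uhp[OF y z]]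
  by (simp add: slash_j_factor moebius_mat_mul[OF x y z] j_factor_mat_mul[OF y z] power_int_mult_distrib)

lemma slash_cong:
  assumes "\<And>z. z \<in> uhp \<Longrightarrow> f z = g z" "\<gamma> \<in> SL2Z" "z \<in> uhp"
  shows "slash w f \<gamma> z = slash w g \<gamma> z"
  using assms moebius_in_uhp by (simp add: slash_j_factor)

lemma slash_mult:
  assumes "\<gamma> \<in> SL2Z" "z \<in> uhp"
  shows "slash (w1 + w2) (\<lambda>z. f z * g z) \<gamma> z = slash w1 f \<gamma> z * slash w2 g \<gamma> z"
proof -
  have "j_factor \<gamma> z powi (- (w1 + w2)) = j_factor \<gamma> z powi (-w1) * j_factor \<gamma> z powi (-w2)"
    using j_factor_nonzero[OF assms] by (simp add: power_int_add[symmetric])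
  then show ?thesis
    by (simp add: slash_j_factor)
qed

lemma slash_invariant_translate:
  assumes "\<forall>\<gamma>\<in>SL2Z. \<forall>z\<in>uhp. slash w f \<gamma> z = f z" "z \<in> uhp"
  shows "f (z + 1) = f z"
proof -
  have "(1,1,0,1) \<in> SL2Z"
    by (simp add: SL2Z_def)
  with assms have "slash w f (1,1,0,1) z = f z"
    by blast
  then show ?thesis
    by (simp add: slash_def moebius_def)
qed

lemma slash_invariant_inversion:
  assumes "\<forall>\<gamma>\<in>SL2Z. \<forall>z\<in>uhp. slash w f \<gamma> z = f z" "z \<in> uhp"
  shows "f (-1/z) = z powi w * f z"
proof -
  have "(0,-1,1,0) \<in> SL2Z"
    by (simp add: SL2Z_def)
  with assms have "z powi (-w) * f (-1/z) = f z"
    by (auto simp: slash_def moebius_def)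
  moreover have "z \<noteq> 0"
    using assms(2) by (auto simp: uhp_def)
  ultimately show ?thesis
    by (auto simp: power_int_minus field_simps)
qed

lemma minus_inverse_in_uhp: "z \<in> uhp \<Longrightarrow> -1/z \<in> uhp"
  using moebius_in_uhp[of "(0,-1,1,0)" z] by (simp add: SL2Z_def moebius_def)

lemma slash_holomorphic:
  assumes f: "f holomorphic_on uhp" and \<gamma>: "\<gamma> \<in> SL2Z"
  shows "slash w f \<gamma> holomorphic_on uhp"
proof -
  obtain a b c d where \<gamma>_eq: "\<gamma> = (a,b,c,d)"
    by (cases \<gamma>) auto
  have nz: "\<forall>z\<in>uhp. of_int c * z + of_int d \<noteq> (0::complex)"
    using j_factor_nonzero[OF \<gamma>] \<gamma>_eq by (simp add: j_factor_def)
  have "moebius \<gamma> holomorphic_on uhp"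
    using nz \<gamma>_eq unfolding moebius_def by (auto intro!: holomorphic_intros)
  then have "(f \<circ> moebius \<gamma>) holomorphic_on uhp"
    by (rule holomorphic_on_compose_gen[OF _ f]) (use moebius_in_uhp[OF \<gamma>] in auto)
  then have "(\<lambda>z. (of_int c * z + of_int d) powi (-w) * f (moebius \<gamma> z)) holomorphic_on uhp"
    using nz by (auto simp: o_def intro!: holomorphic_intros)
  then show ?thesis
    using \<gamma>_eq by (simp add: slash_def)
qed

section \<open>Cosets of \<open>\<Gamma>\<^sub>0(N)\<close> and the trace to \<open>SL\<^sub>2(\<int>)\<close>\<close>

definition right_coset :: "int \<Rightarrow> int \<times> int \<times> int \<times> int \<Rightarrow> (int \<times> int \<times> int \<times> int) set" where
  "right_coset N g = (\<lambda>\<delta>. mat_mul \<delta> g) ` Gamma0 N"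

definition Gamma0_cosets :: "int \<Rightarrow> (int \<times> int \<times> int \<times> int) set set" where
  "Gamma0_cosets N = right_coset N ` SL2Z"

definition coset_rep :: "(int \<times> int \<times> int \<times> int) set \<Rightarrow> int \<times> int \<times> int \<times> int" where
  "coset_rep C = (SOME g. g \<in> C)"

lemma right_coset_self: "g \<in> right_coset N g"
  unfolding right_coset_def using mat_id_Gamma0 by (metis image_eqI mat_mul_id(2))

lemma right_coset_subset_SL2Z: "g \<in> SL2Z \<Longrightarrow> right_coset N g \<subseteq> SL2Z"
  unfolding right_coset_def using SL2Z_mat_mul Gamma0_subset_SL2Z by blast

lemma right_coset_in_Gamma0_cosets: "g \<in> SL2Z \<Longrightarrow> right_coset N g \<in> Gamma0_cosets N"
  unfolding Gamma0_cosets_def by blast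

lemma right_coset_mat_id: "right_coset N mat_id = Gamma0 N"
  unfolding right_coset_def by simp

lemma right_coset_eq:
  assumes "g' \<in> right_coset N g"
  shows "right_coset N g' = right_coset N g"
proof -
  obtain \<delta> where \<delta>: "\<delta> \<in> Gamma0 N" "g' = mat_mul \<delta> g"
    using assms unfolding right_coset_def by auto
  have g: "g = mat_mul (mat_adj \<delta>) g'"
    using \<delta> mat_adj_mul Gamma0_subset_SL2Z by (metis mat_mul_assoc mat_mul_id(2))
  have "right_coset N h' \<subseteq> right_coset N h" if "h' = mat_mul \<eta> h" "\<eta> \<in> Gamma0 N" for h h' \<eta>
  proof
    fix x
    assume "x \<in> right_coset N h'"
    then obtain \<epsilon> where \<epsilon>: "\<epsilon> \<in> Gamma0 N" "x = mat_mul \<epsilon> h'"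
      unfolding right_coset_def by auto
    then have "x = mat_mul (mat_mul \<epsilon> \<eta>) h"
      using that(1) by (simp add: mat_mul_assoc)
    moreover have "mat_mul \<epsilon> \<eta> \<in> Gamma0 N"
      using Gamma0_mat_mul \<epsilon>(1) that(2) by blast
    ultimately show "x \<in> right_coset N h"
      unfolding right_coset_def by blast
  qed
  then show ?thesis
    using \<delta> g Gamma0_mat_adj by (metis subset_antisym)
qed

lemma right_coset_eq_if_bottom_row_cong:
  assumes g: "g \<in> SL2Z" and g': "g' \<in> SL2Z"
    and cong: "(case g of (a,b,c,d) \<Rightarrow> (c mod N, d mod N)) = (case g' of (a,b,c,d) \<Rightarrow> (c mod N, d mod N))"
  shows "right_coset N g' = right_coset N g"
proof -
  obtain a b c d where h: "g = (a,b,c,d)"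
    by (cases g) auto
  obtain a' b' c' d' where h': "g' = (a',b',c',d')"
    by (cases g') auto
  have "N dvd c' - c" "N dvd d' - d"
    using cong h h' by (auto simp: mod_eq_dvd_iff dvd_diff_commute)
  then have "N dvd (c' - c) * d - (d' - d) * c"
    by auto
  then have "N dvd c' * d - d' * c"
    by (simp add: algebra_simps)
  moreover have "mat_mul g' (mat_adj g) \<in> SL2Z"
    using SL2Z_mat_mul SL2Z_mat_adj g g' by blast
  ultimately have "mat_mul g' (mat_adj g) \<in> Gamma0 N"
    using h h' by (simp add: SL2Z_def Gamma0_def mat_mul_def mat_adj_def algebra_simps)
  moreover have "g' = mat_mul (mat_mul g' (mat_adj g)) g"
    using mat_adj_mul[OF g] by (simp add: mat_mul_assoc)
  ultimately have "g' \<in> right_coset N g"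
    unfolding right_coset_def by blast
  then show ?thesis
    by (rule right_coset_eq)
qed

lemma finite_Gamma0_cosets:
  assumes "N > 0"
  shows "finite (Gamma0_cosets N)"
proof -
  define row where "row = (\<lambda>g::int\<times>int\<times>int\<times>int. case g of (a,b,c,d) \<Rightarrow> (c mod N, d mod N))"
  define h where "h = (\<lambda>p. right_coset N (SOME g. g \<in> SL2Z \<and> row g = p))"
  have "Gamma0_cosets N \<subseteq> h ` ({0..<N} \<times> {0..<N})"
  proof
    fix C
    assume "C \<in> Gamma0_cosets N"
    then obtain g where g: "g \<in> SL2Z" "C = right_coset N g"
      unfolding Gamma0_cosets_def by auto
    have ex: "\<exists>g'. g' \<in> SL2Z \<and> row g' = row g"
      using g by blast
    define g0 where "g0 = (SOME g'. g' \<in> SL2Z \<and> row g' = row g)"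
    have g0: "g0 \<in> SL2Z" "row g0 = row g"
      using someI_ex[OF ex] unfolding g0_def by auto
    have "right_coset N g0 = right_coset N g"
      using right_coset_eq_if_bottom_row_cong[OF g(1) g0(1)] g0(2) by (simp add: row_def)
    then have "C = h (row g)"
      unfolding h_def g0_def using g(2) by simp
    moreover have "row g \<in> {0..<N} \<times> {0..<N}"
      using assms by (cases g) (simp add: row_def)
    ultimately show "C \<in> h ` ({0..<N} \<times> {0..<N})"
      by (simp only: image_eqI)
  qed
  then show ?thesis
    by (rule finite_subset) simp
qed

lemma coset_rep:
  assumes "C \<in> Gamma0_cosets N"
  shows "coset_rep C \<in> C" "coset_rep C \<in> SL2Z" "right_coset N (coset_rep C) = C"
proof -
  obtain g where g: "g \<in> SL2Z" "C = right_coset N g"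
    using assms unfolding Gamma0_cosets_def by auto
  show r: "coset_rep C \<in> C"
    unfolding coset_rep_def using right_coset_self g by (metis someI_ex)
  show "coset_rep C \<in> SL2Z"
    using r g right_coset_subset_SL2Z by blast
  show "right_coset N (coset_rep C) = C"
    using right_coset_eq r g by blast
qed

lemma inj_on_right_translate_cosets:
  assumes s: "s \<in> SL2Z"
  shows "inj_on (\<lambda>C. right_coset N (mat_mul (coset_rep C) s)) (Gamma0_cosets N)"
proof (rule inj_onI)
  fix C1 C2
  assume C: "C1 \<in> Gamma0_cosets N" "C2 \<in> Gamma0_cosets N"
    and eq: "right_coset N (mat_mul (coset_rep C1) s) = right_coset N (mat_mul (coset_rep C2) s)"
  have "mat_mul (coset_rep C1) s \<in> right_coset N (mat_mul (coset_rep C2) s)"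
    using eq right_coset_self by metis
  then obtain \<delta> where \<delta>: "\<delta> \<in> Gamma0 N" "mat_mul (coset_rep C1) s = mat_mul \<delta> (mat_mul (coset_rep C2) s)"
    unfolding right_coset_def by auto
  then have "mat_mul (mat_mul (coset_rep C1) s) (mat_adj s) = mat_mul (mat_mul \<delta> (mat_mul (coset_rep C2) s)) (mat_adj s)"
    by simp
  then have "coset_rep C1 = mat_mul \<delta> (coset_rep C2)"
    by (simp add: mat_mul_assoc mat_mul_adj[OF s])
  then have "coset_rep C1 \<in> right_coset N (coset_rep C2)"
    using \<delta>(1) unfolding right_coset_def by blast
  then have "right_coset N (coset_rep C1) = right_coset N (coset_rep C2)"
    by (rule right_coset_eq)
  then show "C1 = C2"
    using coset_rep(3) C by metis
qed

lemma right_translate_cosets: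
  assumes s: "s \<in> SL2Z" and N: "N > 0"
  shows "(\<lambda>C. right_coset N (mat_mul (coset_rep C) s)) ` Gamma0_cosets N = Gamma0_cosets N"
  by (rule endo_inj_surj[OF finite_Gamma0_cosets[OF N] _ inj_on_right_translate_cosets[OF s]])
    (use coset_rep right_coset_in_Gamma0_cosets SL2Z_mat_mul s in blast)

lemma not_cusp_equiv_infty_coset_rep:
  assumes C: "C \<in> Gamma0_cosets N" "C \<noteq> Gamma0 N"
  shows "\<not> cusp_equiv_infty N (coset_rep C)"
proof
  assume cusp: "cusp_equiv_infty N (coset_rep C)"
  obtain a b c d where r: "coset_rep C = (a,b,c,d)"
    by (cases "coset_rep C") auto
  obtain a' b' c' d' where \<delta>: "(a',b',c',d') \<in> Gamma0 N" "c'*a + d'*c = 0"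
    using cusp r by (auto simp: cusp_equiv_infty_def)
  define \<delta> where "\<delta> = (a',b',c',d')"
  have "mat_mul \<delta> (coset_rep C) \<in> SL2Z"
    using SL2Z_mat_mul[OF Gamma0_subset_SL2Z coset_rep(2)[OF C(1)]] \<delta> \<delta>_def by blast
  then have "mat_mul \<delta> (coset_rep C) \<in> Gamma0 N"
    using \<delta> r \<delta>_def by (simp add: SL2Z_def Gamma0_def mat_mul_def)
  then have "mat_mul (mat_adj \<delta>) (mat_mul \<delta> (coset_rep C)) \<in> Gamma0 N"
    using Gamma0_mat_mul Gamma0_mat_adj \<delta> \<delta>_def by blast
  moreover have "mat_mul (mat_adj \<delta>) (mat_mul \<delta> (coset_rep C)) = coset_rep C"
    using mat_adj_mul[OF Gamma0_subset_SL2Z[OF \<delta>(1)]] \<delta>_def by (simp add: mat_mul_assoc[symmetric])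
  ultimately have "coset_rep C \<in> right_coset N mat_id"
    by (simp add: right_coset_mat_id)
  then have "C = Gamma0 N"
    using right_coset_eq[of "coset_rep C" N mat_id] coset_rep(3)[OF C(1)] by (simp add: right_coset_mat_id)
  then show False
    using C(2) by simp
qed

definition trace_form :: "int \<Rightarrow> int \<Rightarrow> (complex \<Rightarrow> complex) \<Rightarrow> complex \<Rightarrow> complex" where
  "trace_form N w g = (\<lambda>z. \<Sum>C\<in>Gamma0_cosets N. slash w g (coset_rep C) z)"

lemma slash_coset_rep:
  assumes inv: "\<forall>\<delta>\<in>Gamma0 N. \<forall>z\<in>uhp. slash w g \<delta> z = g z"
    and \<gamma>: "\<gamma> \<in> SL2Z" and z: "z \<in> uhp"
  shows "slash w g (coset_rep (right_coset N \<gamma>)) z = slash w g \<gamma> z"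
proof -
  have "coset_rep (right_coset N \<gamma>) \<in> right_coset N \<gamma>"
    by (rule coset_rep(1)[OF right_coset_in_Gamma0_cosets[OF \<gamma>]])
  then obtain \<delta> where \<delta>: "\<delta> \<in> Gamma0 N" "coset_rep (right_coset N \<gamma>) = mat_mul \<delta> \<gamma>"
    by (auto simp only: right_coset_def)
  have "slash w g (mat_mul \<delta> \<gamma>) z = slash w (slash w g \<delta>) \<gamma> z"
    by (rule slash_mat_mul[OF Gamma0_subset_SL2Z[OF \<delta>(1)] \<gamma> z])
  also have "\<dots> = slash w g \<gamma> z"
    by (rule slash_cong[OF _ \<gamma> z]) (use inv \<delta> in auto)
  finally show ?thesis
    using \<delta> by simp
qed

lemma trace_form_slash_invariant:
  assumes N: "N > 0"
    and inv: "\<forall>\<delta>\<in>Gamma0 N. \<forall>z\<in>uhp. slash w g \<delta> z = g z"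
    and s: "s \<in> SL2Z" and z: "z \<in> uhp"
  shows "slash w (trace_form N w g) s z = trace_form N w g z"
proof -
  define \<pi> where "\<pi> = (\<lambda>C. right_coset N (mat_mul (coset_rep C) s))"
  have "slash w (trace_form N w g) s z = (\<Sum>C\<in>Gamma0_cosets N. slash w (slash w g (coset_rep C)) s z)"
    by (simp add: trace_form_def slash_j_factor sum_distrib_left)
  also have "\<dots> = (\<Sum>C\<in>Gamma0_cosets N. slash w g (coset_rep (\<pi> C)) z)"
  proof (rule sum.cong[OF refl])
    fix C
    assume "C \<in> Gamma0_cosets N"
    then have r: "coset_rep C \<in> SL2Z"
      by (rule coset_rep(2))
    have "slash w (slash w g (coset_rep C)) s z = slash w g (mat_mul (coset_rep C) s) z"
      using slash_mat_mul[OF r s z] by simp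
    also have "\<dots> = slash w g (coset_rep (\<pi> C)) z"
      unfolding \<pi>_def using slash_coset_rep[OF inv SL2Z_mat_mul[OF r s] z] by simp
    finally show "slash w (slash w g (coset_rep C)) s z = slash w g (coset_rep (\<pi> C)) z" .
  qed
  also have "\<dots> = (\<Sum>C\<in>\<pi> ` Gamma0_cosets N. slash w g (coset_rep C) z)"
    by (rule sum.reindex[symmetric, unfolded o_def]) (use inj_on_right_translate_cosets[OF s] \<pi>_def in simp)
  also have "\<pi> ` Gamma0_cosets N = Gamma0_cosets N"
    unfolding \<pi>_def by (rule right_translate_cosets[OF s N])
  finally show ?thesis
    by (simp add: trace_form_def)
qed

lemma trace_form_holomorphic:
  assumes "g holomorphic_on uhp"
  shows "trace_form N w g holomorphic_on uhp"
  unfolding trace_form_def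
  by (intro holomorphic_on_sum slash_holomorphic[OF assms] coset_rep(2)) simp

lemma trace_form_eq:
  assumes N: "N > 0"
    and inv: "\<forall>\<delta>\<in>Gamma0 N. \<forall>z\<in>uhp. slash w g \<delta> z = g z"
    and z: "z \<in> uhp"
  shows "trace_form N w g z = g z + (\<Sum>C\<in>Gamma0_cosets N - {Gamma0 N}. slash w g (coset_rep C) z)"
proof -
  have "Gamma0 N \<in> Gamma0_cosets N"
    using right_coset_in_Gamma0_cosets[OF mat_id_SL2Z] by (simp add: right_coset_mat_id)
  moreover have "slash w g (coset_rep (Gamma0 N)) z = g z"
    using slash_coset_rep[OF inv mat_id_SL2Z z] by (simp add: right_coset_mat_id slash_mat_id)
  ultimately show ?thesis
    unfolding trace_form_def by (simp add: sum.remove[OF finite_Gamma0_cosets[OF N]])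
qed

section \<open>Weight-2 forms of level one have periodic primitives\<close>

lemma primitive_transform_diff_constant:
  assumes H: "\<And>z. z \<in> uhp \<Longrightarrow> (H has_field_derivative G z) (at z)"
    and f: "\<And>z. z \<in> uhp \<Longrightarrow> (f has_field_derivative f' z) (at z)"
    and f_uhp: "\<And>z. z \<in> uhp \<Longrightarrow> f z \<in> uhp"
    and G_f: "\<And>z. z \<in> uhp \<Longrightarrow> G (f z) * f' z = G z"
  obtains c where "\<And>z. z \<in> uhp \<Longrightarrow> H (f z) - H z = c"
proof -
  have "\<exists>c. \<forall>z\<in>uhp. H (f z) - H z = c"
  proof (rule has_field_derivative_zero_constant[OF convex_uhp])
    fix z
    assume z: "z \<in> uhp"
    have "((\<lambda>z. H (f z)) has_field_derivative G (f z) * f' z) (at z)"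
      by (rule DERIV_chain2[OF H[OF f_uhp[OF z]] f[OF z]])
    then have "((\<lambda>z. H (f z) - H z) has_field_derivative G (f z) * f' z - G z) (at z)"
      by (intro DERIV_diff H z)
    then show "((\<lambda>z. H (f z) - H z) has_field_derivative 0) (at z within uhp)"
      using G_f[OF z] by (simp add: has_field_derivative_at_within)
  qed
  then show ?thesis
    using that by blast
qed

lemma weight2_level1_periodic_primitive:
  assumes hol: "G holomorphic_on uhp"
    and inv: "\<forall>\<gamma>\<in>SL2Z. \<forall>z\<in>uhp. slash 2 G \<gamma> z = G z"
  obtains H where "\<And>z. z \<in> uhp \<Longrightarrow> (H has_field_derivative G z) (at z)"
    and "\<And>z. z \<in> uhp \<Longrightarrow> H (z + 1) = H z"
proof -
  have uhp_T: "z + 1 \<in> uhp" if "z \<in> uhp" for z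
    using that by (simp add: uhp_def)
  have G_T: "G (z + 1) * 1 = G z" if "z \<in> uhp" for z
    using slash_invariant_translate[OF inv that] by simp
  have G_S: "G (-1/z) * (1/z\<^sup>2) = G z" if "z \<in> uhp" for z
    using slash_invariant_inversion[OF inv that] that by (auto simp: uhp_def field_simps)
  obtain H0 where "\<And>z. z \<in> uhp \<Longrightarrow> (H0 has_field_derivative G z) (at z within uhp)"
    using holomorphic_convex_primitive'[OF convex_uhp open_uhp hol] by blast
  then have H: "(H0 has_field_derivative G z) (at z)" if "z \<in> uhp" for z
    using at_within_open[OF that open_uhp] that by metis
  obtain c where c: "\<And>z. z \<in> uhp \<Longrightarrow> H0 (z + 1) - H0 z = c"
    by (rule primitive_transform_diff_constant[OF H, of "\<lambda>z. z + 1" "\<lambda>_. 1"])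
      (use G_T uhp_T in \<open>auto intro!: derivative_eq_intros\<close>)
  obtain e where e: "\<And>z. z \<in> uhp \<Longrightarrow> H0 (-1/z) - H0 z = e"
    by (rule primitive_transform_diff_constant[OF H, of "\<lambda>z. -1/z" "\<lambda>z. 1/z\<^sup>2"])
      (use G_S minus_inverse_in_uhp in \<open>auto simp: uhp_def power2_eq_square intro!: derivative_eq_intros\<close>)
  text \<open>\<open>i\<close> is fixed by \<open>z \<mapsto> -1/z\<close>, which maps \<open>\<rho> + 1\<close> to \<open>\<rho> = (-1 + i\<surd>3)/2\<close>.\<close>
  have "e = 0"
    using e[of \<i>] by (simp add: uhp_def)
  define \<rho> where "\<rho> = Complex (-1/2) (sqrt 3 / 2)"
  have \<rho>: "\<rho> \<in> uhp" "\<rho> + 1 \<in> uhp"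
    by (simp_all add: \<rho>_def uhp_def)
  have "(\<rho> + 1) * \<rho> = -1" "\<rho> + 1 \<noteq> 0"
    by (simp_all add: \<rho>_def complex_eq_iff algebra_simps)
  then have "-1/(\<rho> + 1) = \<rho>"
    by (simp add: field_simps)
  then have "c = 0"
    using e[OF \<rho>(2)] c[OF \<rho>(1)] \<open>e = 0\<close> by simp
  then show ?thesis
    using that H c by auto
qed

section \<open>Behaviour at the cusp \<open>\<infinity>\<close>\<close>

definition Im_at_top :: "complex filter" where
  "Im_at_top = filtercomap Im at_top"

lemma eventually_Im_at_top: "eventually P Im_at_top \<longleftrightarrow> (\<exists>Y. \<forall>z. Y \<le> Im z \<longrightarrow> P z)"
  by (simp add: Im_at_top_def eventually_filtercomap_at_top_linorder)

definition qpow :: "int \<Rightarrow> complex \<Rightarrow> complex" where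
  "qpow j z = exp (2 * of_real pi * \<i> * of_int j * z)"

lemma norm_qpow: "norm (qpow j z) = exp (-2 * pi * of_int j * Im z)"
  by (simp add: qpow_def)

lemma qpow_mult: "qpow i z * qpow j z = qpow (i + j) z"
  by (simp add: qpow_def exp_add[symmetric] algebra_simps)

lemma qpow_plus_one: "qpow j (z + 1) = qpow j z"
proof -
  have "qpow j (z + 1) = qpow j z * exp (2 * of_real pi * \<i> * of_int j)"
    unfolding qpow_def by (simp add: exp_add[symmetric] distrib_left)
  moreover have "exp (2 * of_real pi * \<i> * of_int j) = 1"
    using exp_integer_2pi[of "of_int j"] by (simp add: algebra_simps)
  ultimately show ?thesis
    by simp
qed

lemma has_field_derivative_qpow: "(qpow j has_field_derivative (2 * of_real pi * \<i> * of_int j) * qpow j z) (at z)"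
  unfolding qpow_def by (auto intro!: derivative_eq_intros)

definition qpow_primitive :: "int \<Rightarrow> complex \<Rightarrow> complex" where
  "qpow_primitive j z = (if j = 0 then z else qpow j z / (2 * of_real pi * \<i> * of_int j))"

lemma has_field_derivative_qpow_primitive: "(qpow_primitive j has_field_derivative qpow j z) (at z)"
proof (cases "j = 0")
  case True
  then have "qpow_primitive j = (\<lambda>z. z)" "qpow j z = 1"
    by (auto simp: qpow_primitive_def qpow_def)
  then show ?thesis
    by simp
next
  case False
  have "((\<lambda>z. qpow j z / (2 * of_real pi * \<i> * of_int j)) has_field_derivative
      (2 * of_real pi * \<i> * of_int j) * qpow j z / (2 * of_real pi * \<i> * of_int j)) (at z)"
    by (rule DERIV_cdivide[OF has_field_derivative_qpow])
  moreover have "qpow_primitive j = (\<lambda>z. qpow j z / (2 * of_real pi * \<i> * of_int j))"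
    using False by (auto simp: qpow_primitive_def)
  ultimately show ?thesis
    using False by simp
qed

lemma qpow_primitive_plus_one: "qpow_primitive j (z + 1) - qpow_primitive j z = (if j = 0 then 1 else 0)"
  by (simp add: qpow_primitive_def qpow_plus_one)

text \<open>\<open>f = O(q\<^sup>J)\<close> at \<open>\<infinity>\<close>.\<close>
definition vanishes_to_order :: "int \<Rightarrow> (complex \<Rightarrow> complex) \<Rightarrow> bool" where
  "vanishes_to_order J f \<longleftrightarrow> (\<exists>K. \<forall>z. 1 \<le> Im z \<longrightarrow> norm (f z) \<le> K * exp (-2 * pi * of_int J * Im z))"

lemma vanishes_to_order_bound_nonneg:
  assumes "\<forall>z. 1 \<le> Im z \<longrightarrow> norm (f z) \<le> K * exp (-2 * pi * of_int J * Im z)"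
  shows "K \<ge> 0"
proof -
  have "1 \<le> Im \<i>"
    by simp
  then have "norm (f \<i>) \<le> K * exp (-2 * pi * of_int J * Im \<i>)"
    using assms by blast
  then have "0 \<le> K * exp (-2 * pi * of_int J * Im \<i>)"
    using norm_ge_zero order_trans by blast
  then show ?thesis
    by (simp add: zero_le_mult_iff)
qed

lemma vanishes_to_order_mono:
  assumes "vanishes_to_order J f" "I \<le> J"
  shows "vanishes_to_order I f"
proof -
  obtain K where K: "\<forall>z. 1 \<le> Im z \<longrightarrow> norm (f z) \<le> K * exp (-2 * pi * of_int J * Im z)"
    using assms(1) unfolding vanishes_to_order_def by blast
  have "norm (f z) \<le> K * exp (-2 * pi * of_int I * Im z)" if z: "1 \<le> Im z" for z
  proof -
    have "exp (-2 * pi * of_int J * Im z) \<le> exp (-2 * pi * of_int I * Im z)"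
      using assms(2) z by (simp add: mult_right_mono)
    then show ?thesis
      using K z vanishes_to_order_bound_nonneg[OF K] by (meson mult_left_mono order_trans)
  qed
  then show ?thesis
    unfolding vanishes_to_order_def by blast
qed

lemma vanishes_to_order_add:
  assumes "vanishes_to_order J f" "vanishes_to_order J g"
  shows "vanishes_to_order J (\<lambda>z. f z + g z)"
proof -
  obtain K1 K2 where
    K1: "\<forall>z. 1 \<le> Im z \<longrightarrow> norm (f z) \<le> K1 * exp (-2 * pi * of_int J * Im z)" and
    K2: "\<forall>z. 1 \<le> Im z \<longrightarrow> norm (g z) \<le> K2 * exp (-2 * pi * of_int J * Im z)"
    using assms unfolding vanishes_to_order_def by blast
  have "norm (f z + g z) \<le> (K1 + K2) * exp (-2 * pi * of_int J * Im z)" if "1 \<le> Im z" for z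
  proof -
    have "norm (f z) + norm (g z) \<le> (K1 + K2) * exp (-2 * pi * of_int J * Im z)"
      using K1 K2 that by (simp only: distrib_right) (meson add_mono)
    then show ?thesis
      using norm_triangle_ineq order_trans by blast
  qed
  then show ?thesis
    unfolding vanishes_to_order_def by blast
qed

lemma vanishes_to_order_mult:
  assumes "vanishes_to_order I f" "vanishes_to_order J g"
  shows "vanishes_to_order (I + J) (\<lambda>z. f z * g z)"
proof -
  obtain K1 K2 where
    K1: "\<forall>z. 1 \<le> Im z \<longrightarrow> norm (f z) \<le> K1 * exp (-2 * pi * of_int I * Im z)" and
    K2: "\<forall>z. 1 \<le> Im z \<longrightarrow> norm (g z) \<le> K2 * exp (-2 * pi * of_int J * Im z)"
    using assms unfolding vanishes_to_order_def by blast
  have "norm (f z * g z) \<le> (K1 * K2) * exp (-2 * pi * of_int (I + J) * Im z)" if z: "1 \<le> Im z" for z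
  proof -
    have "norm (f z * g z) \<le> (K1 * exp (-2 * pi * of_int I * Im z)) * (K2 * exp (-2 * pi * of_int J * Im z))"
      unfolding norm_mult using K1 K2 z vanishes_to_order_bound_nonneg[OF K1] by (intro mult_mono) auto
    also have "\<dots> = (K1 * K2) * exp (-2 * pi * of_int (I + J) * Im z)"
      by (simp add: exp_add[symmetric] algebra_simps)
    finally show ?thesis .
  qed
  then show ?thesis
    unfolding vanishes_to_order_def by blast
qed

lemma vanishes_to_order_sum:
  assumes "\<And>i. i \<in> S \<Longrightarrow> vanishes_to_order J (f i)"
  shows "vanishes_to_order J (\<lambda>z. \<Sum>i\<in>S. f i z)"
  using assms
proof (induction S rule: infinite_finite_induct)
  case (infinite S)
  then show ?case
    by (simp add: vanishes_to_order_def exI[of _ 0])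
next
  case empty
  then show ?case
    by (simp add: vanishes_to_order_def exI[of _ 0])
next
  case (insert x S)
  then show ?case
    by (simp add: vanishes_to_order_add)
qed

lemma vanishes_to_order_qpow_sum:
  "vanishes_to_order M (\<lambda>z. \<Sum>j\<in>{M..<J}. c j * qpow j z)"
proof (rule vanishes_to_order_sum)
  fix j
  assume "j \<in> {M..<J}"
  have "vanishes_to_order j (\<lambda>z. c j * qpow j z)"
    unfolding vanishes_to_order_def by (rule exI[of _ "norm (c j)"]) (simp add: norm_mult norm_qpow)
  then show "vanishes_to_order M (\<lambda>z. c j * qpow j z)"
    using \<open>j \<in> {M..<J}\<close> by (auto intro: vanishes_to_order_mono)
qed

lemma vanishes_to_order_tendsto_zero:
  assumes "vanishes_to_order J f" "J > 0"
  shows "(f \<longlongrightarrow> 0) Im_at_top"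
proof -
  obtain K where K: "\<forall>z. 1 \<le> Im z \<longrightarrow> norm (f z) \<le> K * exp (-2 * pi * of_int J * Im z)"
    using assms(1) unfolding vanishes_to_order_def by blast
  have "((\<lambda>y::real. exp (-2 * pi * of_int J * y)) \<longlongrightarrow> 0) at_top"
    using assms(2) by real_asymp
  then have "((\<lambda>z. exp (-2 * pi * of_int J * Im z)) \<longlongrightarrow> 0) Im_at_top"
    unfolding Im_at_top_def using filterlim_compose filterlim_filtercomap by blast
  moreover have "eventually (\<lambda>z. norm (f z) \<le> norm (exp (-2 * pi * of_int J * Im z)) * K) Im_at_top"
    using K unfolding eventually_Im_at_top by (auto simp: mult.commute)
  ultimately show ?thesis
    by (rule tendsto_0_le)
qed

lemma norm_qpow_le:
  assumes "J \<le> j" "1 \<le> Im z"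
  shows "norm (qpow j z) \<le> norm (qpow j \<i>) * exp (-2 * pi * of_int J * (Im z - 1))"
proof -
  have "0 \<le> 2 * pi * ((of_int j - of_int J) * (Im z - 1))"
    using assms by (intro mult_nonneg_nonneg) auto
  then show ?thesis
    by (simp add: norm_qpow exp_add[symmetric] algebra_simps)
qed

text \<open>By \<open>norm_qpow_le\<close>, the tail \<open>\<Sum>\<^bsub>j \<ge> J\<^esub> a\<^sub>j q\<^sup>j\<close> is bounded by its absolutely convergent
  value at \<open>z = i\<close> times \<open>|q(z)/q(i)|\<^sup>J\<close>.\<close>
lemma vanishes_to_order_qexp_tail:
  assumes f: "has_int_qexp f a" and low: "\<And>j. j < M \<Longrightarrow> a j = 0"
  shows "vanishes_to_order J (\<lambda>z. f z - (\<Sum>j\<in>{M..<J}. of_int (a j) * qpow j z))"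
proof -
  define tail where "tail = - {M..<J}"
  define p where "p = (\<lambda>z. \<Sum>j\<in>{M..<J}. of_int (a j) * qpow j z)"
  have sums: "((\<lambda>j. of_int (a j) * qpow j z) has_sum f z) UNIV" if "z \<in> uhp" for z
    using f that unfolding has_int_qexp_def qpow_def by auto
  have "\<i> \<in> uhp"
    by (simp add: uhp_def)
  then have "(\<lambda>j. of_int (a j) * qpow j \<i>) summable_on UNIV"
    using sums unfolding summable_on_def by blast
  then have "(\<lambda>j. norm (of_int (a j) * qpow j \<i>)) summable_on UNIV"
    by (rule summable_on_iff_abs_summable_on_complex[THEN iffD1])
  then have "(\<lambda>j. norm (of_int (a j) * qpow j \<i>)) summable_on tail"
    by (rule summable_on_subset_banach) simp
  then obtain T where T: "((\<lambda>j. norm (of_int (a j) * qpow j \<i>)) has_sum T) tail"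
    by (auto simp: summable_on_def)
  have "norm (f z - p z) \<le> (T * exp (2 * pi * of_int J)) * exp (-2 * pi * of_int J * Im z)"
    if z: "1 \<le> Im z" for z
  proof -
    define E where "E = exp (-2 * pi * of_int J * (Im z - 1))"
    have "((\<lambda>j. of_int (a j) * qpow j z) has_sum p z) {M..<J}"
      unfolding p_def by (rule has_sum_finite) simp
    then have "((\<lambda>j. of_int (a j) * qpow j z) has_sum (f z - p z)) tail"
      unfolding tail_def using has_sum_Diff[OF sums] z by (simp add: uhp_def Compl_eq_Diff_UNIV)
    moreover have "((\<lambda>j. norm (of_int (a j) * qpow j \<i>) * E) has_sum T * E) tail"
      by (rule has_sum_cmult_left[OF T])
    moreover have "norm (of_int (a j) * qpow j z) \<le> norm (of_int (a j) * qpow j \<i>) * E" if "j \<in> tail" for j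
    proof (cases "a j = 0")
      case False
      then have "J \<le> j"
        using that low[of j] unfolding tail_def by force
      then show ?thesis
        using norm_qpow_le[OF _ z] by (simp add: E_def norm_mult mult.assoc mult_left_mono)
    qed simp
    ultimately have "norm (f z - p z) \<le> T * E"
      by (rule norm_infsum_le)
    also have "T * E = (T * exp (2 * pi * of_int J)) * exp (-2 * pi * of_int J * Im z)"
      by (simp add: E_def exp_add[symmetric] algebra_simps)
    finally show ?thesis .
  qed
  then show ?thesis
    unfolding vanishes_to_order_def p_def by blast
qed

lemma vanishes_to_order_mult_diff:
  assumes "vanishes_to_order J1 (\<lambda>z. f z - p z)" "vanishes_to_order M1 p"
    and "vanishes_to_order J2 (\<lambda>z. g z - r z)" "vanishes_to_order M2 r"
    and "J \<le> M1 + J2" "J \<le> J1 + M2" "J \<le> J1 + J2"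
  shows "vanishes_to_order J (\<lambda>z. f z * g z - p z * r z)"
proof -
  have "(\<lambda>z. f z * g z - p z * r z)
      = (\<lambda>z. (p z * (g z - r z) + (f z - p z) * r z) + (f z - p z) * (g z - r z))"
    by (simp add: algebra_simps)
  moreover have "vanishes_to_order J (\<lambda>z. p z * (g z - r z))"
    using vanishes_to_order_mult[OF assms(2,3)] assms(5) by (rule vanishes_to_order_mono)
  moreover have "vanishes_to_order J (\<lambda>z. (f z - p z) * r z)"
    using vanishes_to_order_mult[OF assms(1,4)] assms(6) by (rule vanishes_to_order_mono)
  moreover have "vanishes_to_order J (\<lambda>z. (f z - p z) * (g z - r z))"
    using vanishes_to_order_mult[OF assms(1,3)] assms(7) by (rule vanishes_to_order_mono)
  ultimately show ?thesis
    by (simp add: vanishes_to_order_add)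
qed

lemma vanishes_to_order_qexp_product:
  assumes f: "has_int_qexp f a" "\<And>j. j < M1 \<Longrightarrow> a j = 0"
    and g: "has_int_qexp g c" "\<And>j. j < M2 \<Longrightarrow> c j = 0"
    and "J \<le> M1 + J2" "J \<le> J1 + M2" "J \<le> J1 + J2"
  shows "vanishes_to_order J
    (\<lambda>z. f z * g z - (\<Sum>(i,j)\<in>{M1..<J1} \<times> {M2..<J2}. of_int (a i * c j) * qpow (i + j) z))"
proof -
  have "(\<Sum>(i,j)\<in>{M1..<J1} \<times> {M2..<J2}. of_int (a i * c j) * qpow (i + j) z)
      = (\<Sum>i\<in>{M1..<J1}. of_int (a i) * qpow i z) * (\<Sum>j\<in>{M2..<J2}. of_int (c j) * qpow j z)" for z
    by (simp add: sum_product sum.cartesian_product qpow_mult[symmetric] algebra_simps)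
  then show ?thesis
    using vanishes_to_order_mult_diff[OF vanishes_to_order_qexp_tail[OF f] vanishes_to_order_qpow_sum
        vanishes_to_order_qexp_tail[OF g] vanishes_to_order_qpow_sum] assms(5-7)
    by simp
qed

section \<open>The constant term of a weight-2 form vanishes\<close>

lemma shift_constant_eq_zero:
  assumes K: "\<And>z. z \<in> uhp \<Longrightarrow> (K has_field_derivative D z) (at z)"
    and D: "(D \<longlongrightarrow> 0) Im_at_top"
    and shift: "\<And>z. z \<in> uhp \<Longrightarrow> K (z + 1) - K z = c"
  shows "c = 0"
proof -
  have "norm c \<le> 0 + \<epsilon>" if \<epsilon>: "\<epsilon> > 0" for \<epsilon>
  proof -
    obtain Y where Y: "\<And>z. Y \<le> Im z \<Longrightarrow> norm (D z) < \<epsilon>"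
      using D \<epsilon> unfolding tendsto_iff eventually_Im_at_top by (auto simp: dist_norm)
    define S where "S = {z. max Y 1 \<le> Im z}"
    define z0 where "z0 = \<i> * of_real (max Y 1)"
    have S_uhp: "z \<in> uhp" if "z \<in> S" for z
      using that by (auto simp: S_def uhp_def)
    have "norm (K (z0 + 1) - K z0) \<le> \<epsilon> * norm ((z0 + 1) - z0)"
    proof (rule field_differentiable_bound)
      show "convex S"
        unfolding S_def by (rule convex_halfspace_Im_ge)
      show "(K has_field_derivative D z) (at z within S)" if "z \<in> S" for z
        using K[OF S_uhp[OF that]] by (rule has_field_derivative_at_within)
      show "norm (D z) \<le> \<epsilon>" if "z \<in> S" for z
        using Y[of z] that by (simp add: S_def)
    qed (simp_all add: S_def z0_def)
    moreover have "z0 \<in> uhp"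
      by (simp add: z0_def uhp_def)
    ultimately show ?thesis
      using shift by simp
  qed
  then have "norm c \<le> 0"
    by (rule field_le_epsilon)
  then show ?thesis
    by simp
qed

lemma trace_form_minus_tendsto_zero:
  assumes N: "N > 0"
    and inv: "\<forall>\<delta>\<in>Gamma0 N. \<forall>z\<in>uhp. slash w g \<delta> z = g z"
    and cusps: "\<And>\<gamma>. \<gamma> \<in> SL2Z \<Longrightarrow> \<not> cusp_equiv_infty N \<gamma> \<Longrightarrow> (slash w g \<gamma> \<longlongrightarrow> 0) Im_at_top"
  shows "((\<lambda>z. trace_form N w g z - g z) \<longlongrightarrow> 0) Im_at_top"
proof -
  define R where "R = (\<lambda>z. \<Sum>C\<in>Gamma0_cosets N - {Gamma0 N}. slash w g (coset_rep C) z)"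
  have "(R \<longlongrightarrow> 0) Im_at_top"
    unfolding R_def
  proof (rule tendsto_null_sum)
    fix C
    assume "C \<in> Gamma0_cosets N - {Gamma0 N}"
    then show "(slash w g (coset_rep C) \<longlongrightarrow> 0) Im_at_top"
      using cusps[OF coset_rep(2) not_cusp_equiv_infty_coset_rep] by blast
  qed
  moreover have "eventually (\<lambda>z. R z = trace_form N w g z - g z) Im_at_top"
    unfolding eventually_Im_at_top R_def
    by (rule exI[of _ 1]) (auto simp: uhp_def trace_form_eq[OF N inv])
  ultimately show ?thesis
    by (rule Lim_transform_eventually)
qed

lemma constant_term_eq_zero:
  fixes g :: "complex \<Rightarrow> complex" and b :: "'a \<Rightarrow> complex" and e :: "'a \<Rightarrow> int"
  assumes N: "N > 0" and hol: "g holomorphic_on uhp"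
    and inv: "\<forall>\<delta>\<in>Gamma0 N. \<forall>z\<in>uhp. slash 2 g \<delta> z = g z"
    and cusps: "\<And>\<gamma>. \<gamma> \<in> SL2Z \<Longrightarrow> \<not> cusp_equiv_infty N \<gamma> \<Longrightarrow> (slash 2 g \<gamma> \<longlongrightarrow> 0) Im_at_top"
    and principal_part: "vanishes_to_order 1 (\<lambda>z. g z - (\<Sum>x\<in>I. b x * qpow (e x) z))"
  shows "(\<Sum>x\<in>I. if e x = 0 then b x else 0) = 0"
proof -
  define G where "G = trace_form N 2 g"
  define P where "P = (\<lambda>z. \<Sum>x\<in>I. b x * qpow (e x) z)"
  define L where "L = (\<lambda>z. \<Sum>x\<in>I. b x * qpow_primitive (e x) z)"
  obtain H where H: "\<And>z. z \<in> uhp \<Longrightarrow> (H has_field_derivative G z) (at z)"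
    and H_periodic: "\<And>z. z \<in> uhp \<Longrightarrow> H (z + 1) = H z"
    using weight2_level1_periodic_primitive[of G] trace_form_holomorphic[OF hol]
      trace_form_slash_invariant[OF N inv] unfolding G_def by blast
  have "((\<lambda>z. (G z - g z) + (g z - P z)) \<longlongrightarrow> 0 + 0) Im_at_top"
    unfolding G_def P_def
    by (intro tendsto_add trace_form_minus_tendsto_zero[OF N inv cusps]
        vanishes_to_order_tendsto_zero[OF principal_part]) simp_all
  then have GP: "((\<lambda>z. G z - P z) \<longlongrightarrow> 0) Im_at_top"
    by simp
  have "(L has_field_derivative P z) (at z)" for z
    unfolding L_def P_def by (intro DERIV_sum DERIV_cmult has_field_derivative_qpow_primitive)
  then have "\<And>z. z \<in> uhp \<Longrightarrow> ((\<lambda>z. H z - L z) has_field_derivative G z - P z) (at z)"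
    by (intro DERIV_diff H)
  moreover have "(H (z + 1) - L (z + 1)) - (H z - L z) = - (\<Sum>x\<in>I. if e x = 0 then b x else 0)"
    if "z \<in> uhp" for z
  proof -
    have "(H (z + 1) - L (z + 1)) - (H z - L z) = - (L (z + 1) - L z)"
      using H_periodic[OF that] by simp
    also have "L (z + 1) - L z = (\<Sum>x\<in>I. b x * (qpow_primitive (e x) (z + 1) - qpow_primitive (e x) z))"
      by (simp add: L_def sum_subtractf[symmetric] right_diff_distrib)
    also have "\<dots> = (\<Sum>x\<in>I. if e x = 0 then b x else 0)"
      by (rule sum.cong) (simp_all add: qpow_primitive_plus_one)
    finally show ?thesis .
  qed
  ultimately have "- (\<Sum>x\<in>I. if e x = 0 then b x else 0) = 0"
    by (rule shift_constant_eq_zero[OF _ GP])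
  then show ?thesis
    by simp
qed

lemma mult_cusp_form_vanishes_at_cusps:
  assumes f: "wh_modular_form w1 N f" and h: "wh_cusp_form w2 N h"
    and \<gamma>: "\<gamma> \<in> SL2Z" "\<not> cusp_equiv_infty N \<gamma>"
  shows "(slash (w1 + w2) (\<lambda>z. f z * h z) \<gamma> \<longlongrightarrow> 0) Im_at_top"
proof -
  obtain B where B: "\<And>z. 1 \<le> Im z \<Longrightarrow> norm (slash w1 f \<gamma> z) \<le> B"
    using f \<gamma> unfolding wh_modular_form_def by blast
  have "(slash w2 h \<gamma> \<longlongrightarrow> 0) Im_at_top"
  proof (rule tendstoI)
    fix \<epsilon> :: real
    assume "\<epsilon> > 0"
    then obtain Y where "\<forall>z. Y \<le> Im z \<longrightarrow> norm (slash w2 h \<gamma> z) \<le> \<epsilon> / 2"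
      using h \<gamma> unfolding wh_cusp_form_def by (meson half_gt_zero)
    then show "eventually (\<lambda>z. dist (slash w2 h \<gamma> z) 0 < \<epsilon>) Im_at_top"
      using \<open>\<epsilon> > 0\<close> unfolding eventually_Im_at_top by (intro exI[of _ Y]) auto
  qed
  moreover have "eventually (\<lambda>z. norm (slash (w1 + w2) (\<lambda>z. f z * h z) \<gamma> z) \<le> norm (slash w2 h \<gamma> z) * B) Im_at_top"
    unfolding eventually_Im_at_top
  proof (intro exI[of _ 1] allI impI)
    fix z :: complex
    assume z: "1 \<le> Im z"
    then have "norm (slash (w1 + w2) (\<lambda>z. f z * h z) \<gamma> z) = norm (slash w1 f \<gamma> z) * norm (slash w2 h \<gamma> z)"
      using slash_mult[OF \<gamma>(1)] by (simp add: uhp_def norm_mult)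
    also have "\<dots> \<le> B * norm (slash w2 h \<gamma> z)"
      by (rule mult_right_mono[OF B[OF z] norm_ge_zero])
    finally show "norm (slash (w1 + w2) (\<lambda>z. f z * h z) \<gamma> z) \<le> norm (slash w2 h \<gamma> z) * B"
      by (simp only: mult.commute)
  qed
  ultimately show ?thesis
    by (rule tendsto_0_le)
qed

lemma mult_cusp_form_slash_invariant:
  assumes "wh_modular_form w1 N f" "wh_cusp_form w2 N h"
  shows "\<forall>\<delta>\<in>Gamma0 N. \<forall>z\<in>uhp. slash (w1 + w2) (\<lambda>z. f z * h z) \<delta> z = f z * h z"
  using assms slash_mult[OF Gamma0_subset_SL2Z] unfolding wh_cusp_form_def wh_modular_form_def by simp

lemma constant_term_of_product:
  fixes A C :: "int \<Rightarrow> int" and n m :: int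
  assumes n: "n \<ge> 2" and m: "m \<ge> -1"
    and A: "A (- n) = 1" "\<forall>j < - 1. j \<noteq> - n \<longrightarrow> A j = 0"
    and C: "C (- m) = -1" "\<forall>j\<le>1. j \<noteq> - m \<longrightarrow> C j = 0"
  shows "(\<Sum>(i,j)\<in>{-n..<m+2} \<times> {-m..<n+1}. if i + j = 0 then A i * C j else 0) = C n - A m"
proof -
  have "(\<Sum>(i,j)\<in>{-n..<m+2} \<times> {-m..<n+1}. if i + j = 0 then A i * C j else 0)
      = (\<Sum>i\<in>{-n..<m+2}. \<Sum>j\<in>{-m..<n+1}. if j = -i then A i * C j else 0)"
    by (simp add: sum.cartesian_product[symmetric] add_eq_0_iff eq_commute[of _ "- _"])
  also have "\<dots> = (\<Sum>i\<in>{-n..<m+2}. if -i \<in> {-m..<n+1} then A i * C (-i) else 0)"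
    by simp
  also have "\<dots> = (\<Sum>i\<in>{-n, m}. if -i \<in> {-m..<n+1} then A i * C (-i) else 0)"
  proof (intro sum.mono_neutral_right ballI)
    fix i
    assume i: "i \<in> {-n..<m+2} - {-n, m}"
    show "(if -i \<in> {-m..<n+1} then A i * C (-i) else 0) = 0"
      using A(2) C(2) i by (cases "i < -1") auto
  qed (use n m in auto)
  also have "\<dots> = C n - A m"
    using n m A(1) C(1) by simp
  finally show ?thesis .
qed

theorem theorem1p2:
  fixes k N n m :: int and \<phi> F :: "complex \<Rightarrow> complex" and A C :: "int \<Rightarrow> int"
  assumes kN: "(k, N) \<in> {(2,27), (2,32), (2,36), (2,49), (4,9)}"
    and n: "n \<ge> 2"
    and m: "if k = 2 then m = -1 \<or> m \<ge> 1 else m \<ge> -1"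
    and phi_form: "wh_modular_form (2 - k) N \<phi>"
    and phi_exp: "has_int_qexp \<phi> A"
    and phi_lead: "A (- n) = 1"
    and phi_shape: "\<forall>j < - 1. j \<noteq> - n \<longrightarrow> A j = 0"
    and phi_const: "k = 2 \<longrightarrow> A 0 = 0"
    and F_form: "wh_cusp_form k N F"
    and F_exp: "has_int_qexp F C"
    and F_lead: "C (- m) = -1"
    and F_shape: "\<forall>j\<le>1. j \<noteq> - m \<longrightarrow> C j = 0"
  shows "C n = A m"
proof -
  have N: "N > 0"
    using kN by auto
  have m: "m \<ge> -1"
    using m by (auto split: if_splits)
  define I where "I = {-n..<m+2} \<times> {-m..<n+1}"
  define b where "b = (\<lambda>(i,j). of_int (A i * C j) :: complex)"
  define e where "e = (\<lambda>(i::int, j::int). i + j)"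
  have "vanishes_to_order 1 (\<lambda>z. \<phi> z * F z - (\<Sum>x\<in>I. b x * qpow (e x) z))"
    using vanishes_to_order_qexp_product[OF phi_exp _ F_exp, of "-n" "-m" 1 "n+1" "m+2"] n m phi_shape F_shape
    unfolding I_def b_def e_def by (simp add: case_prod_unfold)
  then have "(\<Sum>x\<in>I. if e x = 0 then b x else 0) = 0"
    using phi_form F_form mult_cusp_form_slash_invariant[OF phi_form F_form]
      mult_cusp_form_vanishes_at_cusps[OF phi_form F_form]
    by (intro constant_term_eq_zero[OF N]) (auto simp: wh_cusp_form_def wh_modular_form_def intro!: holomorphic_intros)
  moreover have "(\<Sum>x\<in>I. if e x = 0 then b x else 0) = of_int (C n - A m)"
    using constant_term_of_product[OF n m phi_lead phi_shape F_lead F_shape, symmetric]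
    unfolding I_def b_def e_def by (simp add: case_prod_unfold if_distrib cong: if_cong)
  ultimately show ?thesis
    by simp
qed

end
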